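(* Let $\mathcal{P}\subset\mathbb{R}^d$ be a polytope (cage) with vertices $v_1,\dots,v_K$. For $x\in\mathcal{P}$ let $\widehat{\mathbb{T}}_x$ be the set of non-degenerate simplices $T$ whose vertices are cage vertices of $\mathcal{P}$, which contain $x$, and which contain no cage vertex other than their own vertices (i.e. for every $v\in\{v_1,\dots,v_K\}$, $v\in T$ implies $v$ is a vertex of $T$). Suppose that for every $x\in\mathcal{P}$, $\mathcal{N}(x)=(\mathcal{N}_T(x))_{T\in\widehat{\mathbb{T}}_x}$ is a vector of non-negative numbers summing to one, and define $$\alpha(x;\mathcal{P})=\sum_{T\in\widehat{\mathbb{T}}_x}\mathcal{N}_T(x)\,\alpha(x;\mathcal{P},T).$$ Then $\alpha(\cdot;\mathcal{P})$ is a valid generalized barycentric coordinate function: for all $x\in\mathcal{P}$ and all $i,j$, $\alpha_i(x;\mathcal{P})\ge 0$, $\sum_i\alpha_i(x;\mathcal{P})=1$, $\sum_i\alpha_i(x;\mathcal{P})\,v_i=x$, and $\alpha_i(v_j;\mathcal{P})=\delta_{ij}$.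
   Context: For a non-degenerate (nonzero volume) simplex $T$ in $\mathbb{R}^d$ with vertex set $\{v_{l_0},\dots,v_{l_d}\}\subseteq\{v_1,\dots,v_K\}$ containing $x$, the simplex barycentric coordinates are the unique $\lambda\in\mathbb{R}^{d+1}$ with $\sum_k\lambda_k v_{l_k}=x$ and $\sum_k\lambda_k=1$; the cage coordinates due to $T$, $\alpha(x;\mathcal{P},T)\in\mathbb{R}^K$, have entry $i$ equal to the simplex coordinate of $x$ associated with $v_i$ if $v_i$ is a vertex of $T$, and $0$ otherwise. $\delta_{ij}$ is the Kronecker delta. *)

theory Defs
  imports "HOL-Analysis.Analysis"
begin

text \<open>Cage vertices are v 0, ..., v (K-1) (0-based indexing).
  A simplex with cage vertices is given by the index set S of its vertices.\<close>

definition nondeg_simplex :: "(nat \<Rightarrow> 'a::euclidean_space) \<Rightarrow> nat set \<Rightarrow> bool" where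
  "nondeg_simplex v S \<longleftrightarrow> card (v ` S) = DIM('a) + 1 \<and> \<not> affine_dependent (v ` S)"

definition cage_coords :: "(nat \<Rightarrow> 'a::euclidean_space) \<Rightarrow> nat set \<Rightarrow> 'a \<Rightarrow> nat \<Rightarrow> real" where
  "cage_coords v S x =
     (THE l. (\<forall>k. k \<notin> S \<longrightarrow> l k = 0) \<and> sum l S = 1 \<and> (\<Sum>k\<in>S. l k *\<^sub>R v k) = x)"

definition admissible_simplices :: "(nat \<Rightarrow> 'a::euclidean_space) \<Rightarrow> nat \<Rightarrow> 'a \<Rightarrow> nat set set" where
  "admissible_simplices v K x =
     {S. S \<subseteq> {..<K} \<and> nondeg_simplex v S \<and> x \<in> convex hull (v ` S) \<and>
         (\<forall>j<K. v j \<in> convex hull (v ` S) \<longrightarrow> j \<in> S)}"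

definition cage_gbc ::
  "(nat \<Rightarrow> 'a::euclidean_space) \<Rightarrow> nat \<Rightarrow> ('a \<Rightarrow> nat set \<Rightarrow> real) \<Rightarrow> 'a \<Rightarrow> nat \<Rightarrow> real" where
  "cage_gbc v K N x i = (\<Sum>S\<in>admissible_simplices v K x. N x S * cage_coords v S x i)"

end

theory Submission
  imports Defs
begin

text \<open>On each admissible simplex the cage coordinates are the simplex barycentric coordinates,
  padded by zeros; these are non-negative, reproduce \<open>x\<close> and are the Kronecker delta at the
  simplex vertices. The first two properties are affine and so survive the convex combination
  with weights \<open>N x\<close>. At a cage vertex \<open>v j\<close> every admissible simplex has \<open>v j\<close> as one of its own
  vertices, because it contains no other cage vertex, so every summand is the same Kronecker delta.\<close>

lemma affine_coords_unique:
  fixes v :: "nat \<Rightarrow> 'a::real_vector"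
  assumes "finite S" "inj_on v S" "\<not> affine_dependent (v ` S)"
    and "sum l S = sum m S" "(\<Sum>k\<in>S. l k *\<^sub>R v k) = (\<Sum>k\<in>S. m k *\<^sub>R v k)"
    and "k \<in> S"
  shows "l k = m k"
proof -
  define U where "U y = l (inv_into S v y) - m (inv_into S v y)" for y
  have U_v: "U (v k) = l k - m k" if "k \<in> S" for k
    using assms(2) that by (simp add: U_def)
  have "sum U (v ` S) = 0"
    using assms(4) by (simp add: sum.reindex[OF assms(2)] U_v sum_subtractf)
  moreover have "(\<Sum>y\<in>v ` S. U y *\<^sub>R y) = 0"
    using assms(5) by (simp add: sum.reindex[OF assms(2)] U_v scaleR_diff_left sum_subtractf)
  ultimately have "U (v k) = 0"
    using assms(1,3,6) affine_dependent_explicit_finite[of "v ` S"] by auto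
  then show ?thesis
    using U_v[OF assms(6)] by simp
qed

lemma cage_coords_eqI:
  fixes v :: "nat \<Rightarrow> 'a::euclidean_space"
  assumes "finite S" "inj_on v S" "\<not> affine_dependent (v ` S)"
    and "\<And>k. k \<notin> S \<Longrightarrow> l k = 0" "sum l S = 1" "(\<Sum>k\<in>S. l k *\<^sub>R v k) = x"
  shows "cage_coords v S x = l"
  unfolding cage_coords_def
proof (rule the_equality)
  fix m
  assume m: "(\<forall>k. k \<notin> S \<longrightarrow> m k = 0) \<and> sum m S = 1 \<and> (\<Sum>k\<in>S. m k *\<^sub>R v k) = x"
  show "m = l"
  proof
    fix k
    show "m k = l k"
      using m assms affine_coords_unique[of S v m l k] by (cases "k \<in> S") auto
  qed
qed (use assms in auto)

lemma cage_coords_convex_hull: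
  fixes v :: "nat \<Rightarrow> 'a::euclidean_space"
  assumes "finite S" "inj_on v S" "\<not> affine_dependent (v ` S)" "x \<in> convex hull (v ` S)"
  shows "cage_coords v S x k \<ge> 0"
    and "k \<notin> S \<Longrightarrow> cage_coords v S x k = 0"
    and "sum (cage_coords v S x) S = 1"
    and "(\<Sum>k\<in>S. cage_coords v S x k *\<^sub>R v k) = x"
proof -
  obtain u where u: "\<forall>y\<in>v ` S. 0 \<le> u y" "sum u (v ` S) = 1" "(\<Sum>y\<in>v ` S. u y *\<^sub>R y) = x"
    using assms(1,4) convex_hull_finite[of "v ` S"] by auto
  define l where "l k = (if k \<in> S then u (v k) else 0)" for k
  have "sum l S = 1" "(\<Sum>k\<in>S. l k *\<^sub>R v k) = x"
    using u(2,3) by (simp_all add: l_def sum.reindex[OF assms(2)])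
  then have "cage_coords v S x = l"
    using cage_coords_eqI[OF assms(1-3)] by (simp add: l_def)
  with u(1) \<open>sum l S = 1\<close> \<open>(\<Sum>k\<in>S. l k *\<^sub>R v k) = x\<close>
  show "cage_coords v S x k \<ge> 0" "k \<notin> S \<Longrightarrow> cage_coords v S x k = 0"
    "sum (cage_coords v S x) S = 1" "(\<Sum>k\<in>S. cage_coords v S x k *\<^sub>R v k) = x"
    by (simp_all add: l_def)
qed

lemma cage_coords_vertex:
  fixes v :: "nat \<Rightarrow> 'a::euclidean_space"
  assumes "finite S" "inj_on v S" "\<not> affine_dependent (v ` S)" "j \<in> S"
  shows "cage_coords v S (v j) = (\<lambda>k. if k = j then 1 else 0)"
  using assms by (intro cage_coords_eqI) (auto simp: if_distrib[of "\<lambda>c. c *\<^sub>R _"] cong: if_cong)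

lemma admissible_simplicesD:
  assumes "inj_on v {..<K}" "S \<in> admissible_simplices v K x"
  shows "S \<subseteq> {..<K}" "finite S" "inj_on v S" "\<not> affine_dependent (v ` S)"
    and "x \<in> convex hull (v ` S)"
    and "\<And>j. j < K \<Longrightarrow> v j \<in> convex hull (v ` S) \<Longrightarrow> j \<in> S"
  using assms by (auto simp: admissible_simplices_def nondeg_simplex_def
      intro: finite_subset inj_on_subset)

lemma cage_coords_admissible:
  assumes "inj_on v {..<K}" "S \<in> admissible_simplices v K x"
  shows "cage_coords v S x k \<ge> 0"
    and "sum (cage_coords v S x) {..<K} = 1"
    and "(\<Sum>k<K. cage_coords v S x k *\<^sub>R v k) = x"
proof -
  note S = admissible_simplicesD[OF assms]
  note coords = cage_coords_convex_hull[OF S(2-5)]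
  have extend: "sum g S = sum g {..<K}"
    if "\<And>k. k \<notin> S \<Longrightarrow> g k = 0" for g :: "nat \<Rightarrow> 'b::comm_monoid_add"
    by (rule sum.mono_neutral_left) (use S(1) that in auto)
  show "cage_coords v S x k \<ge> 0"
    by (fact coords(1))
  show "sum (cage_coords v S x) {..<K} = 1"
    using extend[of "cage_coords v S x"] coords(2,3) by simp
  show "(\<Sum>k<K. cage_coords v S x k *\<^sub>R v k) = x"
    using extend[of "\<lambda>k. cage_coords v S x k *\<^sub>R v k"] coords(2,4) by simp
qed

lemma convex_combination_affine_coords:
  fixes v :: "'i \<Rightarrow> 'a::real_vector" and c :: "'s \<Rightarrow> 'i \<Rightarrow> real"
  assumes "sum w A = 1"
    and "\<And>S. S \<in> A \<Longrightarrow> sum (c S) I = 1"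
    and "\<And>S. S \<in> A \<Longrightarrow> (\<Sum>i\<in>I. c S i *\<^sub>R v i) = x"
  shows "(\<Sum>i\<in>I. \<Sum>S\<in>A. w S * c S i) = 1"
    and "(\<Sum>i\<in>I. (\<Sum>S\<in>A. w S * c S i) *\<^sub>R v i) = x"
proof -
  have "(\<Sum>i\<in>I. \<Sum>S\<in>A. w S * c S i) = (\<Sum>S\<in>A. w S * sum (c S) I)"
    by (simp add: sum.swap[of _ I] sum_distrib_left)
  also have "\<dots> = 1"
    using assms(1,2) by simp
  finally show "(\<Sum>i\<in>I. \<Sum>S\<in>A. w S * c S i) = 1" .
  have "(\<Sum>i\<in>I. (\<Sum>S\<in>A. w S * c S i) *\<^sub>R v i) = (\<Sum>S\<in>A. w S *\<^sub>R (\<Sum>i\<in>I. c S i *\<^sub>R v i))"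
    by (simp add: scaleR_sum_left scaleR_sum_right sum.swap[of _ I])
  also have "\<dots> = sum w A *\<^sub>R x"
    using assms(3) by (simp add: scaleR_sum_left)
  finally show "(\<Sum>i\<in>I. (\<Sum>S\<in>A. w S * c S i) *\<^sub>R v i) = x"
    using assms(1) by simp
qed

lemma cage_gbc_vertex:
  assumes "inj_on v {..<K}" "j < K" "(\<Sum>S\<in>admissible_simplices v K (v j). N (v j) S) = 1"
  shows "cage_gbc v K N (v j) i = (if i = j then 1 else 0)"
proof -
  have "cage_coords v S (v j) i = (if i = j then 1 else 0)"
    if "S \<in> admissible_simplices v K (v j)" for S
  proof -
    note S = admissible_simplicesD[OF assms(1) that]
    have "j \<in> S"
      using S(5,6) assms(2) by blast
    then show ?thesis
      using cage_coords_vertex[OF S(2-4)] by simp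
  qed
  then show ?thesis
    using assms(3) by (simp add: cage_gbc_def flip: sum_distrib_right)
qed

theorem proposition2:
  fixes v :: "nat \<Rightarrow> 'a::euclidean_space" and K :: nat and P :: "'a set"
    and N :: "'a \<Rightarrow> nat set \<Rightarrow> real"
  assumes inj: "inj_on v {..<K}"
    and P_def: "P = convex hull (v ` {..<K})"
    and vert: "\<And>i. i < K \<Longrightarrow> v i extreme_point_of P"
    and N_nonneg: "\<And>x S. x \<in> P \<Longrightarrow> S \<in> admissible_simplices v K x \<Longrightarrow> N x S \<ge> 0"
    and N_sum: "\<And>x. x \<in> P \<Longrightarrow> (\<Sum>S\<in>admissible_simplices v K x. N x S) = 1"
  shows "(\<forall>x\<in>P. \<forall>i<K. cage_gbc v K N x i \<ge> 0)
       \<and> (\<forall>x\<in>P. (\<Sum>i<K. cage_gbc v K N x i) = 1)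
       \<and> (\<forall>x\<in>P. (\<Sum>i<K. cage_gbc v K N x i *\<^sub>R v i) = x)
       \<and> (\<forall>i<K. \<forall>j<K. cage_gbc v K N (v j) i = (if i = j then 1 else 0))"
proof (intro conjI ballI allI impI)
  fix x assume "x \<in> P"
  note combination = convex_combination_affine_coords[OF N_sum[OF \<open>x \<in> P\<close>]
      cage_coords_admissible(2) cage_coords_admissible(3), OF inj _ inj]
  show "cage_gbc v K N x i \<ge> 0" for i
    unfolding cage_gbc_def
    using N_nonneg[OF \<open>x \<in> P\<close>] cage_coords_admissible(1)[OF inj] by (auto intro!: sum_nonneg)
  show "(\<Sum>i<K. cage_gbc v K N x i) = 1"
    unfolding cage_gbc_def by (rule combination(1))
  show "(\<Sum>i<K. cage_gbc v K N x i *\<^sub>R v i) = x"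
    unfolding cage_gbc_def by (rule combination(2))
next
  fix i j assume "i < K" "j < K"
  then have "v j \<in> P"
    using P_def by (simp add: hull_inc)
  then show "cage_gbc v K N (v j) i = (if i = j then 1 else 0)"
    using cage_gbc_vertex[OF inj \<open>j < K\<close>] N_sum by blast
qed

end
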